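(* Let $\boldsymbol X \in \mathbb{R}^{n\times d}$, $\boldsymbol y \in \mathbb{R}^n$, $\boldsymbol M = \boldsymbol X^\top \boldsymbol X$, $\boldsymbol r = \boldsymbol X^\top \boldsymbol y$. Assume (A1) $\boldsymbol r > \mathbf 0$ and (A2) $M_{ij}\le 0$ for all $i\neq j$. Let $\boldsymbol C>\mathbf 0$, $\boldsymbol k>\mathbf 0$ in $\mathbb{R}^d$, and for $\varepsilon>0$ let $\boldsymbol\theta^{(\varepsilon)}(t)$ solve $$\frac{\mathrm d \theta_i}{\mathrm d t} = \theta_i\Big(r_i - \sum_{j=1}^d M_{ij}\theta_j\Big),\quad i=1,\dots,d,$$ with $\boldsymbol\theta^{(\varepsilon)}(0) = (C_1\varepsilon^{k_1},\dots,C_d\varepsilon^{k_d})$. Then there exists $\varepsilon_0>0$ such that for all $\varepsilon\in(0,\varepsilon_0]$ and all $i\in\{1,\dots,d\}$, $t\mapsto\theta_i^{(\varepsilon)}(t)$ is nondecreasing on $[0,\infty)$.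
   Context: Vector inequalities are coordinatewise. *)

theory Defs
  imports "HOL-Analysis.Analysis"
begin

definition lv_field :: "real^'d^'d \<Rightarrow> real^'d \<Rightarrow> real^'d \<Rightarrow> real^'d" where
  "lv_field M r \<theta> = (\<chi> i. \<theta> $ i * (r $ i - (\<Sum>j\<in>UNIV. M $ i $ j * \<theta> $ j)))"

definition solves_lv :: "real^'d^'d \<Rightarrow> real^'d \<Rightarrow> real^'d \<Rightarrow> (real \<Rightarrow> real^'d) \<Rightarrow> bool" where
  "solves_lv M r \<theta>0 \<theta> \<longleftrightarrow> \<theta> 0 = \<theta>0 \<and>
     (\<forall>t\<ge>0. (\<theta> has_vector_derivative lv_field M r (\<theta> t)) (at t within {0..}))"

end

theory Submission
  imports Defs
begin

text \<open>Write \<open>g = r - M\<theta>\<close> for the gap vector, so that \<open>\<theta>\<^sub>i' = \<theta>\<^sub>i g\<^sub>i\<close> and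
  \<open>g' = -M(\<theta>\<^sub>j g\<^sub>j)\<^sub>j\<close>. As \<open>\<epsilon> \<rightarrow> 0\<close> the initial point tends to \<open>0\<close>, so for small \<open>\<epsilon>\<close>
  it lies in the region \<open>\<theta> > 0, g > 0\<close>. This region is forward invariant: before the first
  exit time \<open>\<tau>\<close> every \<open>\<theta>\<^sub>i\<close> is nondecreasing, so \<open>\<theta>\<^sub>i(\<tau>) \<ge> \<theta>\<^sub>i(0) > 0\<close>; and since the
  off-diagonal entries of \<open>M\<close> are nonpositive, \<open>g\<^sub>i' \<ge> -M\<^sub>i\<^sub>i \<theta>\<^sub>i g\<^sub>i \<ge> -|M\<^sub>i\<^sub>i| \<theta>\<^sub>i(\<tau>) g\<^sub>i\<close>,
  so \<open>exp(|M\<^sub>i\<^sub>i| \<theta>\<^sub>i(\<tau>) t) g\<^sub>i(t)\<close> is nondecreasing and \<open>g\<^sub>i(\<tau>) > 0\<close>. Hence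
  \<open>\<theta>\<^sub>i' = \<theta>\<^sub>i g\<^sub>i \<ge> 0\<close> for all time.\<close>

lemma DERIV_within_nonneg_imp_increasing:
  fixes f f' :: "real \<Rightarrow> real"
  assumes "a \<le> b" "{a..b} \<subseteq> S"
    and deriv: "\<And>x. x \<in> {a..b} \<Longrightarrow> (f has_real_derivative f' x) (at x within S)"
    and nonneg: "\<And>x. x \<in> {a<..<b} \<Longrightarrow> 0 \<le> f' x"
  shows "f a \<le> f b"
proof -
  have deriv_ab: "(f has_real_derivative f' x) (at x within {a..b})" if "x \<in> {a..b}" for x
    using DERIV_subset[OF deriv[OF that] assms(2)] .
  show ?thesis
  proof (rule DERIV_nonneg_imp_increasing_open[OF \<open>a \<le> b\<close>])
    fix x assume "a < x" "x < b"
    then have "(f has_real_derivative f' x) (at x)"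
      using deriv_ab[of x] at_within_interior[of x "{a..b}"] by simp
    then show "\<exists>y. (f has_real_derivative y) (at x) \<and> 0 \<le> y"
      using nonneg \<open>a < x\<close> \<open>x < b\<close> by auto
  next
    show "continuous_on {a..b} f"
      unfolding continuous_on_eq_continuous_within using deriv_ab by (blast intro: DERIV_continuous)
  qed
qed

lemma DERIV_within_ge_neg_linear_imp_pos:
  fixes h h' :: "real \<Rightarrow> real"
  assumes "a \<le> b" "{a..b} \<subseteq> S"
    and deriv: "\<And>x. x \<in> {a..b} \<Longrightarrow> (h has_real_derivative h' x) (at x within S)"
    and growth: "\<And>x. x \<in> {a<..<b} \<Longrightarrow> - L * h x \<le> h' x"
    and "0 < h a"
  shows "0 < h b"
proof -
  have "exp (L * a) * h a \<le> exp (L * b) * h b"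
  proof (rule DERIV_within_nonneg_imp_increasing[OF assms(1,2)])
    show "((\<lambda>x. exp (L * x) * h x) has_real_derivative exp (L * x) * (L * h x + h' x))
        (at x within S)" if "x \<in> {a..b}" for x
      by (auto intro!: derivative_eq_intros deriv[OF that] simp: algebra_simps)
    show "0 \<le> exp (L * x) * (L * h x + h' x)" if "x \<in> {a<..<b}" for x
      using growth[OF that] by simp
  qed
  moreover have "0 < exp (L * a) * h a" using \<open>0 < h a\<close> by simp
  ultimately have "0 < exp (L * b) * h b" by linarith
  then show ?thesis by (simp add: zero_less_mult_iff)
qed

lemma real_nonneg_continuous_induct:
  fixes P :: "real \<Rightarrow> bool"
  assumes closed: "closed {t. 0 \<le> t \<and> \<not> P t}"
    and step: "\<And>\<tau>. 0 \<le> \<tau> \<Longrightarrow> (\<And>t. 0 \<le> t \<Longrightarrow> t < \<tau> \<Longrightarrow> P t) \<Longrightarrow> P \<tau>"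
    and "0 \<le> t"
  shows "P t"
proof (rule ccontr)
  define E where "E = {t. 0 \<le> t \<and> \<not> P t}"
  assume "\<not> P t"
  with \<open>0 \<le> t\<close> have "E \<noteq> {}" by (auto simp: E_def)
  moreover have "bdd_below E" by (auto simp: E_def bdd_below_def)
  ultimately have "Inf E \<in> E" using closed_contains_Inf closed E_def by metis
  moreover have "P (Inf E)"
  proof (rule step)
    show "0 \<le> Inf E" using \<open>Inf E \<in> E\<close> by (simp add: E_def)
    show "P t" if "0 \<le> t" "t < Inf E" for t
      using that cInf_lower[OF _ \<open>bdd_below E\<close>, of t] by (force simp: E_def)
  qed
  ultimately show False by (simp add: E_def)
qed

lemma matrix_vector_mult_le_diagonal:
  fixes M :: "real^'n^'n" and v :: "real^'n"
  assumes "\<forall>i j. i \<noteq> j \<longrightarrow> M $ i $ j \<le> 0" "\<forall>j. 0 \<le> v $ j"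
  shows "(M *v v) $ i \<le> M $ i $ i * v $ i"
proof -
  have "(\<Sum>j\<in>UNIV - {i}. M $ i $ j * v $ j) \<le> 0"
    using assms by (intro sum_nonpos) (simp add: mult_nonpos_nonneg)
  then show ?thesis
    by (simp add: matrix_vector_mult_def sum.remove[of UNIV i])
qed

lemma lv_field_nth: "lv_field M r \<theta> $ i = \<theta> $ i * (r - M *v \<theta>) $ i"
  by (simp add: lv_field_def matrix_vector_mult_def)

lemma lv_gap_rate_ge:
  fixes M :: "real^'n^'n"
  assumes "\<forall>i j. i \<noteq> j \<longrightarrow> M $ i $ j \<le> 0" "\<forall>j. 0 \<le> \<theta> $ j" "\<forall>j. 0 \<le> (r - M *v \<theta>) $ j"
  shows "- (M $ i $ i * \<theta> $ i) * (r - M *v \<theta>) $ i \<le> - (M *v lv_field M r \<theta>) $ i"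
  using matrix_vector_mult_le_diagonal[OF assms(1), of "lv_field M r \<theta>" i] assms(2,3)
  by (simp add: lv_field_nth)

context
  fixes M :: "real^'d^'d" and r \<theta>0 :: "real^'d" and \<theta> :: "real \<Rightarrow> real^'d"
  assumes sol: "solves_lv M r \<theta>0 \<theta>"
begin

lemma lv_solution_initial: "\<theta> 0 = \<theta>0"
  using sol by (simp add: solves_lv_def)

lemma lv_solution_nth_deriv:
  assumes "0 \<le> t"
  shows "((\<lambda>t. \<theta> t $ i) has_real_derivative \<theta> t $ i * (r - M *v \<theta> t) $ i) (at t within {0..})"
proof -
  have "(\<theta> has_vector_derivative lv_field M r (\<theta> t)) (at t within {0..})"
    using sol assms by (simp add: solves_lv_def)
  from bounded_linear.has_vector_derivative[OF bounded_linear_vec_nth this]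
  show ?thesis by (simp add: has_real_derivative_iff_has_vector_derivative lv_field_nth)
qed

lemma lv_solution_gap_deriv:
  assumes "0 \<le> t"
  shows "((\<lambda>t. (r - M *v \<theta> t) $ i) has_real_derivative
           - (M *v lv_field M r (\<theta> t)) $ i) (at t within {0..})"
proof -
  have "((\<lambda>t. r $ i - (\<Sum>j\<in>UNIV. M $ i $ j * \<theta> t $ j)) has_real_derivative
           - (\<Sum>j\<in>UNIV. M $ i $ j * lv_field M r (\<theta> t) $ j)) (at t within {0..})"
    using lv_solution_nth_deriv[OF assms]
    by (auto intro!: derivative_eq_intros simp: lv_field_nth ac_simps)
  then show ?thesis by (simp add: matrix_vector_mult_def)
qed

lemma lv_solution_continuous_on: "continuous_on {0..} \<theta>"
  using sol by (intro continuous_on_vector_derivative) (auto simp: solves_lv_def)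

lemma lv_solution_positive_at_first_exit:
  assumes off_diag: "\<forall>i j. i \<noteq> j \<longrightarrow> M $ i $ j \<le> 0"
    and pos0: "\<forall>i. 0 < \<theta>0 $ i" and gap0: "\<forall>i. 0 < (r - M *v \<theta>0) $ i"
    and "0 \<le> \<tau>"
    and before: "\<And>x j. x \<in> {0<..<\<tau>} \<Longrightarrow> 0 < \<theta> x $ j \<and> 0 < (r - M *v \<theta> x) $ j"
  shows "0 < \<theta> \<tau> $ i \<and> 0 < (r - M *v \<theta> \<tau>) $ i"
proof
  have incr: "\<theta> s $ j \<le> \<theta> \<tau> $ j" if "0 \<le> s" "s \<le> \<tau>" for s j
  proof (rule DERIV_within_nonneg_imp_increasing[OF that(2), of "{0..}"])
    show "((\<lambda>t. \<theta> t $ j) has_real_derivative \<theta> x $ j * (r - M *v \<theta> x) $ j) (at x within {0..})"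
      if "x \<in> {s..\<tau>}" for x
      using lv_solution_nth_deriv[of x j] that \<open>0 \<le> s\<close> by simp
  qed (use that before in \<open>auto intro: less_imp_le\<close>)
  have "0 < \<theta> 0 $ i" using pos0 by (simp add: lv_solution_initial)
  also have "\<dots> \<le> \<theta> \<tau> $ i" using incr \<open>0 \<le> \<tau>\<close> by simp
  finally show "0 < \<theta> \<tau> $ i" .
  show "0 < (r - M *v \<theta> \<tau>) $ i"
  proof (rule DERIV_within_ge_neg_linear_imp_pos[OF \<open>0 \<le> \<tau>\<close>, of "{0..}"])
    show "((\<lambda>t. (r - M *v \<theta> t) $ i) has_real_derivative - (M *v lv_field M r (\<theta> x)) $ i)
        (at x within {0..})" if "x \<in> {0..\<tau>}" for x
      using that by (intro lv_solution_gap_deriv) simp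
    show "- (\<bar>M $ i $ i\<bar> * \<theta> \<tau> $ i) * (r - M *v \<theta> x) $ i \<le> - (M *v lv_field M r (\<theta> x)) $ i"
      if x: "x \<in> {0<..<\<tau>}" for x
    proof -
      have "M $ i $ i * \<theta> x $ i \<le> \<bar>M $ i $ i\<bar> * \<theta> x $ i"
        using before[OF x, of i] by (intro mult_right_mono) auto
      also have "\<dots> \<le> \<bar>M $ i $ i\<bar> * \<theta> \<tau> $ i"
        using incr[of x i] x by (intro mult_left_mono) auto
      finally have "- (\<bar>M $ i $ i\<bar> * \<theta> \<tau> $ i) * (r - M *v \<theta> x) $ i
          \<le> - (M $ i $ i * \<theta> x $ i) * (r - M *v \<theta> x) $ i"
        using before[OF x, of i] by (intro mult_right_mono) auto
      also have "\<dots> \<le> - (M *v lv_field M r (\<theta> x)) $ i"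
        using before[OF x] by (intro lv_gap_rate_ge[OF off_diag]) (auto intro: less_imp_le)
      finally show ?thesis .
    qed
    show "0 < (r - M *v \<theta> 0) $ i"
      using gap0 by (simp add: lv_solution_initial)
  qed auto
qed

lemma lv_solution_stays_positive:
  assumes off_diag: "\<forall>i j. i \<noteq> j \<longrightarrow> M $ i $ j \<le> 0"
    and pos0: "\<forall>i. 0 < \<theta>0 $ i" and gap0: "\<forall>i. 0 < (r - M *v \<theta>0) $ i"
    and "0 \<le> t"
  shows "0 < \<theta> t $ i \<and> 0 < (r - M *v \<theta> t) $ i"
proof -
  define g where "g t = r - M *v \<theta> t" for t
  define P where "P t \<longleftrightarrow> (\<forall>i. 0 < \<theta> t $ i \<and> 0 < g t $ i)" for t
  have "continuous_on {0..} g"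
    unfolding g_def
    using bounded_linear.continuous_on[OF matrix_vector_mul_bounded_linear lv_solution_continuous_on]
    by (intro continuous_on_diff continuous_on_const)
  note cont = continuous_on_component[OF lv_solution_continuous_on] continuous_on_component[OF this]
  note closed_sublevel = cont[THEN continuous_on_closed_Collect_le, OF continuous_on_const closed_atLeast]
  have "{t. 0 \<le> t \<and> \<not> P t} = (\<Union>j. {t \<in> {0..}. \<theta> t $ j \<le> 0} \<union> {t \<in> {0..}. g t $ j \<le> 0})"
    by (auto simp: P_def not_less)
  then have "closed {t. 0 \<le> t \<and> \<not> P t}"
    by (simp only:) (intro closed_UN finite ballI closed_Un closed_sublevel)
  moreover have "P \<tau>" if "0 \<le> \<tau>" and before: "\<And>t. 0 \<le> t \<Longrightarrow> t < \<tau> \<Longrightarrow> P t" for \<tau>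
  proof -
    have "0 < \<theta> x $ j \<and> 0 < (r - M *v \<theta> x) $ j" if "x \<in> {0<..<\<tau>}" for x j
      using before[of x] that unfolding P_def g_def by simp
    from lv_solution_positive_at_first_exit[OF off_diag pos0 gap0 \<open>0 \<le> \<tau>\<close> this]
    show "P \<tau>" unfolding P_def g_def by blast
  qed
  ultimately have "P t"
    using real_nonneg_continuous_induct \<open>0 \<le> t\<close> by blast
  then show ?thesis unfolding P_def g_def by blast
qed

lemma lv_solution_mono_on:
  assumes "\<forall>i j. i \<noteq> j \<longrightarrow> M $ i $ j \<le> 0"
    and "\<forall>i. 0 < \<theta>0 $ i" "\<forall>i. 0 < (r - M *v \<theta>0) $ i"
  shows "mono_on {0..} (\<lambda>t. \<theta> t $ i)"
proof (rule mono_onI)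
  fix s t :: real assume "s \<in> {0..}" "t \<in> {0..}" "s \<le> t"
  show "\<theta> s $ i \<le> \<theta> t $ i"
  proof (rule DERIV_within_nonneg_imp_increasing[OF \<open>s \<le> t\<close>, of "{0..}"])
    show "((\<lambda>t. \<theta> t $ i) has_real_derivative \<theta> x $ i * (r - M *v \<theta> x) $ i) (at x within {0..})"
      if "x \<in> {s..t}" for x
      using that \<open>s \<in> {0..}\<close> by (intro lv_solution_nth_deriv) simp
    show "0 \<le> \<theta> x $ i * (r - M *v \<theta> x) $ i" if "x \<in> {s<..<t}" for x
      using lv_solution_stays_positive[OF assms, of x i] that \<open>s \<in> {0..}\<close> by simp
  qed (use \<open>s \<in> {0..}\<close> in auto)
qed

end

lemma eventually_lv_initial_gap_pos:
  fixes M :: "real^'d^'d" and r C k :: "real^'d"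
  assumes "\<forall>i. 0 < r $ i" "\<forall>i. 0 < k $ i"
  shows "\<forall>\<^sub>F \<epsilon> in at_right 0. \<forall>i. 0 < (r - M *v (\<chi> j. C $ j * \<epsilon> powr (k $ j))) $ i"
proof -
  have "((\<lambda>\<epsilon>. \<chi> j. C $ j * \<epsilon> powr (k $ j)) \<longlongrightarrow> 0) (at_right 0)"
  proof (rule vec_tendstoI)
    fix j
    have "((\<lambda>\<epsilon>::real. \<epsilon> powr (k $ j)) \<longlongrightarrow> 0) (at_right 0)"
      using assms(2) eventually_at_right_less[of "0::real"]
      by (intro tendsto_zero_powrI) (auto elim: eventually_mono)
    then show "((\<lambda>\<epsilon>. (\<chi> j. C $ j * \<epsilon> powr (k $ j)) $ j) \<longlongrightarrow> 0 $ j) (at_right 0)"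
      using tendsto_mult_right_zero by force
  qed
  then have "((\<lambda>\<epsilon>. r - M *v (\<chi> j. C $ j * \<epsilon> powr (k $ j))) \<longlongrightarrow> r - M *v 0) (at_right 0)"
    by (intro tendsto_intros bounded_linear.tendsto[OF matrix_vector_mul_bounded_linear])
  then have "((\<lambda>\<epsilon>. r - M *v (\<chi> j. C $ j * \<epsilon> powr (k $ j))) \<longlongrightarrow> r) (at_right 0)"
    by simp
  then have "((\<lambda>\<epsilon>. (r - M *v (\<chi> j. C $ j * \<epsilon> powr (k $ j))) $ i) \<longlongrightarrow> r $ i) (at_right 0)" for i
    by (rule tendsto_vec_nth)
  then show ?thesis
    using assms(1) by (intro eventually_all_finite order_tendstoD(1)) auto
qed

theorem lemma1:
  fixes X :: "real^'d^'n" and y :: "real^'n" and C k :: "real^'d"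
  assumes A1: "\<forall>i. (transpose X *v y) $ i > 0"
    and A2: "\<forall>i j. i \<noteq> j \<longrightarrow> (transpose X ** X) $ i $ j \<le> 0"
    and Cpos: "\<forall>i. C $ i > 0"
    and kpos: "\<forall>i. k $ i > 0"
  shows "\<exists>\<epsilon>0>0. \<forall>\<epsilon>. 0 < \<epsilon> \<and> \<epsilon> \<le> \<epsilon>0 \<longrightarrow>
           (\<forall>\<theta>. solves_lv (transpose X ** X) (transpose X *v y)
                    (\<chi> i. C $ i * \<epsilon> powr (k $ i)) \<theta> \<longrightarrow>
              (\<forall>i. mono_on {0..} (\<lambda>t. \<theta> t $ i)))"
proof -
  obtain b :: real where "0 < b" and gap0: "\<And>\<epsilon> i. 0 < \<epsilon> \<Longrightarrow> \<epsilon> < b \<Longrightarrow>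
      0 < (transpose X *v y - (transpose X ** X) *v (\<chi> j. C $ j * \<epsilon> powr (k $ j))) $ i"
    using eventually_lv_initial_gap_pos[OF A1 kpos, of "transpose X ** X" C]
    unfolding eventually_at_right_field by auto
  show ?thesis
  proof (intro exI[of _ "b / 2"] conjI allI impI)
    fix \<epsilon> :: real and \<theta> i
    assume "0 < \<epsilon> \<and> \<epsilon> \<le> b / 2"
      and sol: "solves_lv (transpose X ** X) (transpose X *v y) (\<chi> i. C $ i * \<epsilon> powr (k $ i)) \<theta>"
    then show "mono_on {0..} (\<lambda>t. \<theta> t $ i)"
      using Cpos gap0 \<open>0 < b\<close> by (intro lv_solution_mono_on[OF sol A2]) auto
  qed (use \<open>0 < b\<close> in simp)
qed

end
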